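(* Let $\mathfrak{S}\subset\mathbb{R}^D$ be a state space, $\mathfrak{A}$ an action space, $\mathfrak{Z}\coloneqq\mathfrak{S}\times\mathfrak{A}$, and let $\mathcal{H}$ be a reproducing kernel Hilbert space of real-valued functions on $\mathfrak{Z}$ with reproducing kernel $\kappa$ and feature map $\varphi(\mathbf{z})\coloneqq\kappa(\mathbf{z},\cdot)$. Let $\mathcal{M}$ be the set of all maps $\mu\colon\mathfrak{S}\to\mathfrak{A}$. Fix $g\in\mathcal{H}$, a discount factor $\alpha\ge 0$, an integer $N_{\mathrm{av}}\ge 1$, states $\mathbf{s}^{\mathrm{av}}_1,\ldots,\mathbf{s}^{\mathrm{av}}_{N_{\mathrm{av}}}\in\mathfrak{S}$ and functions $\psi_1,\ldots,\psi_{N_{\mathrm{av}}}\in\mathcal{H}$. Define, for every $\mu\in\mathcal{M}$ and $Q\in\mathcal{H}$, $$T_\mu(Q)\coloneqq g+\alpha\sum_{i=1}^{N_{\mathrm{av}}}Q\big(\mathbf{s}^{\mathrm{av}}_i,\mu(\mathbf{s}^{\mathrm{av}}_i)\big)\,\psi_i,\qquad T(Q)\coloneqq g+\alpha\sum_{i=1}^{N_{\mathrm{av}}}\Big(\inf_{a\in\mathfrak{A}}Q(\mathbf{s}^{\mathrm{av}}_i,a)\Big)\,\psi_i ,$$ where all the infima are assumed finite. Let $\mathbf{K}_\Psi$ be the $N_{\mathrm{av}}\times N_{\mathrm{av}}$ matrix with entries $\langle\psi_i,\psi_j\rangle_{\mathcal{H}}$, and for $\mu'\in\mathcal{M}$ let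 $\mathbf{K}^{\mathrm{av}}_{\mu'}$ be the $N_{\mathrm{av}}\times N_{\mathrm{av}}$ matrix with entries $\kappa\big((\mathbf{s}^{\mathrm{av}}_i,\mu'(\mathbf{s}^{\mathrm{av}}_i)),(\mathbf{s}^{\mathrm{av}}_j,\mu'(\mathbf{s}^{\mathrm{av}}_j))\big)$. Set $$\beta\coloneqq\alpha\Big(\|\mathbf{K}_\Psi\|_2\,\sup_{\mu'\in\mathcal{M}}\|\mathbf{K}^{\mathrm{av}}_{\mu'}\|_2\Big)^{1/2},$$ with $\|\cdot\|_2$ the spectral norm. Then for all $Q_1,Q_2\in\mathcal{H}$ and all $\mu\in\mathcal{M}$, $$\|T_\mu(Q_1)-T_\mu(Q_2)\|_{\mathcal{H}}\le\beta\|Q_1-Q_2\|_{\mathcal{H}},\qquad \|T(Q_1)-T(Q_2)\|_{\mathcal{H}}\le\beta\|Q_1-Q_2\|_{\mathcal{H}}.$$ In particular, if $\beta=1$ both maps are nonexpansive, and if $\beta<1$ both are contractions on $\mathcal{H}$.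
   Context: $Q(\mathbf{z})$ denotes evaluation of $Q\in\mathcal{H}$ at $\mathbf{z}\in\mathfrak{Z}$; by the reproducing property $Q(\mathbf{z})=\langle Q,\varphi(\mathbf{z})\rangle_{\mathcal{H}}$. *)

theory Defs
  imports "HOL-Analysis.Analysis"
begin

text \<open>An RKHS of real-valued functions on the type 'z: elements of the Hilbert space 'h
  are identified with functions via the injective evaluation map ev; kappa is the
  reproducing kernel and phi the feature map phi z = kappa(z, .).\<close>
definition is_rkhs ::
  "('h::{real_inner,complete_space} \<Rightarrow> 'z \<Rightarrow> real) \<Rightarrow> ('z \<Rightarrow> 'z \<Rightarrow> real) \<Rightarrow> ('z \<Rightarrow> 'h) \<Rightarrow> bool" where
  "is_rkhs ev kappa phi \<longleftrightarrow>
     inj ev \<and> (\<forall>z. ev (phi z) = kappa z) \<and> (\<forall>Q z. ev Q z = inner Q (phi z))"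

definition spectral_norm :: "real^'n^'n \<Rightarrow> real" where
  "spectral_norm A = onorm (\<lambda>x. A *v x)"

definition T_mu ::
  "('h::real_vector \<Rightarrow> ('s \<times> 'a) \<Rightarrow> real) \<Rightarrow> 'h \<Rightarrow> real \<Rightarrow> ('n::finite \<Rightarrow> 's) \<Rightarrow> ('n \<Rightarrow> 'h)
     \<Rightarrow> ('s \<Rightarrow> 'a) \<Rightarrow> 'h \<Rightarrow> 'h" where
  "T_mu ev g \<alpha> s \<psi> \<mu> Q = g + \<alpha> *\<^sub>R (\<Sum>i\<in>UNIV. ev Q (s i, \<mu> (s i)) *\<^sub>R \<psi> i)"

definition T_opt ::
  "('h::real_vector \<Rightarrow> ('s \<times> 'a) \<Rightarrow> real) \<Rightarrow> 'h \<Rightarrow> real \<Rightarrow> ('n::finite \<Rightarrow> 's) \<Rightarrow> ('n \<Rightarrow> 'h)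
     \<Rightarrow> 'h \<Rightarrow> 'h" where
  "T_opt ev g \<alpha> s \<psi> Q = g + \<alpha> *\<^sub>R (\<Sum>i\<in>UNIV. Inf (range (\<lambda>a. ev Q (s i, a))) *\<^sub>R \<psi> i)"

definition K_Psi :: "('n::finite \<Rightarrow> 'h::real_inner) \<Rightarrow> real^'n^'n" where
  "K_Psi \<psi> = (\<chi> i j. inner (\<psi> i) (\<psi> j))"

definition K_av :: "(('s \<times> 'a) \<Rightarrow> ('s \<times> 'a) \<Rightarrow> real) \<Rightarrow> ('n::finite \<Rightarrow> 's) \<Rightarrow> ('s \<Rightarrow> 'a) \<Rightarrow> real^'n^'n" where
  "K_av kappa s \<mu> = (\<chi> i j. kappa (s i, \<mu> (s i)) (s j, \<mu> (s j)))"

definition beta_const ::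
  "real \<Rightarrow> (('s \<times> 'a) \<Rightarrow> ('s \<times> 'a) \<Rightarrow> real) \<Rightarrow> ('n::finite \<Rightarrow> 's) \<Rightarrow> ('n \<Rightarrow> 'h::real_inner) \<Rightarrow> real" where
  "beta_const \<alpha> kappa s \<psi> =
     \<alpha> * sqrt (spectral_norm (K_Psi \<psi>) * (SUP \<mu>. spectral_norm (K_av kappa s \<mu>)))"

end

theory Submission
  imports Defs
begin

text \<open>Both differences have the form \<open>\<alpha> \<Sum>\<^sub>i c\<^sub>i \<psi>\<^sub>i\<close>. As \<open>\<parallel>\<Sum>\<^sub>i c\<^sub>i \<psi>\<^sub>i\<parallel>\<^sup>2 = c \<bullet> K\<^sub>\<Psi> c\<close>,
  the synthesis map \<open>c \<mapsto> \<Sum>\<^sub>i c\<^sub>i \<psi>\<^sub>i\<close> has norm at most \<open>sqrt \<parallel>K\<^sub>\<Psi>\<parallel>\<^sub>2\<close>; dually, the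
  sampling map \<open>Q \<mapsto> (\<langle>Q, v\<^sub>i\<rangle>)\<^sub>i\<close> has norm at most the square root of the spectral norm
  of the Gram matrix of the \<open>v\<^sub>i\<close>. For \<open>T\<^sub>\<mu>\<close> the coefficients are the samples of
  \<open>Q\<^sub>1 - Q\<^sub>2\<close> at the features \<open>\<phi>(s\<^sub>i, \<mu>(s\<^sub>i))\<close>, whose Gram matrix is \<open>K\<^sup>a\<^sup>v\<^sub>\<mu>\<close>.
  For \<open>T\<close>, each difference of infima is bounded up to \<open>\<epsilon>\<close> by such a sample at a nearly
  minimising action, and these actions assemble into a single policy \<open>\<mu>'\<close>.\<close>

lemma spectral_norm_nonneg: "0 \<le> spectral_norm A"
  unfolding spectral_norm_def by (rule onorm_pos_le) simp

lemma norm_matrix_vector_mult_le_spectral_norm: "norm (A *v x) \<le> spectral_norm A * norm x"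
  unfolding spectral_norm_def by (rule onorm[OF matrix_vector_mul_bounded_linear])

lemma norm_sum_scaleR_le_Gram:
  fixes \<psi> :: "'n::finite \<Rightarrow> 'h::real_inner" and c :: "real^'n"
  shows "norm (\<Sum>i\<in>UNIV. c$i *\<^sub>R \<psi> i) \<le> sqrt (spectral_norm (K_Psi \<psi>)) * norm c"
proof -
  let ?v = "\<Sum>i\<in>UNIV. c$i *\<^sub>R \<psi> i"
  let ?K = "K_Psi \<psi>"
  have "norm ?v ^ 2 = inner c (?K *v c)"
    by (simp add: power2_norm_eq_inner inner_sum_left inner_sum_right inner_vec_def
        matrix_vector_mult_def K_Psi_def sum_distrib_left mult.assoc mult.left_commute)
      (intro sum.cong refl, simp add: inner_commute)
  also have "\<dots> \<le> norm c * norm (?K *v c)" by (rule norm_cauchy_schwarz)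
  also have "\<dots> \<le> norm c * (spectral_norm ?K * norm c)"
    by (simp add: mult_left_mono norm_matrix_vector_mult_le_spectral_norm)
  finally have "norm ?v ^ 2 \<le> spectral_norm ?K * norm c ^ 2"
    by (simp add: power2_eq_square algebra_simps)
  hence "norm ?v \<le> sqrt (spectral_norm ?K * norm c ^ 2)" by (rule real_le_rsqrt)
  thus ?thesis by (simp add: real_sqrt_mult)
qed

lemma norm_inner_samples_le_Gram:
  fixes v :: "'n::finite \<Rightarrow> 'h::real_inner"
  shows "norm (\<chi> i. inner Q (v i)) \<le> sqrt (spectral_norm (K_Psi v)) * norm Q"
proof -
  let ?d = "\<chi> i. inner Q (v i)"
  let ?r = "sqrt (spectral_norm (K_Psi v))"
  have "norm ?d ^ 2 = inner Q (\<Sum>i\<in>UNIV. ?d$i *\<^sub>R v i)"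
    by (simp add: inner_sum_right power2_norm_eq_inner inner_vec_def)
  also have "\<dots> \<le> norm Q * norm (\<Sum>i\<in>UNIV. ?d$i *\<^sub>R v i)"
    by (rule norm_cauchy_schwarz)
  also have "\<dots> \<le> norm Q * (?r * norm ?d)"
    using norm_sum_scaleR_le_Gram[of ?d v] by (intro mult_left_mono) auto
  finally have "norm ?d * norm ?d \<le> norm ?d * (?r * norm Q)"
    by (simp add: power2_eq_square algebra_simps)
  moreover have "0 \<le> ?r * norm Q" by (simp add: spectral_norm_nonneg)
  ultimately show ?thesis
    by (cases "norm ?d = 0") (simp_all add: mult_le_cancel_left)
qed

lemma is_rkhs_kernel_eq_inner:
  assumes "is_rkhs ev kappa phi"
  shows "kappa z w = inner (phi z) (phi w)"
  using assms unfolding is_rkhs_def by metis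

lemma is_rkhs_ev_diff:
  assumes "is_rkhs ev kappa phi"
  shows "ev Q1 z - ev Q2 z = inner (Q1 - Q2) (phi z)"
  using assms unfolding is_rkhs_def by (simp add: inner_diff_left)

lemma K_av_eq_K_Psi_features:
  assumes "is_rkhs ev kappa phi"
  shows "K_av kappa s \<mu> = K_Psi (\<lambda>i. phi (s i, \<mu> (s i)))"
  by (simp add: K_av_def K_Psi_def is_rkhs_kernel_eq_inner[OF assms])

lemma norm_feature_samples_le_SUP:
  assumes rkhs: "is_rkhs ev kappa phi"
    and bdd: "bdd_above (range (\<lambda>\<mu>. spectral_norm (K_av kappa s \<mu>)))"
  shows "norm (\<chi> i. inner Q (phi (s i, \<mu> (s i))))
           \<le> sqrt (SUP \<mu>. spectral_norm (K_av kappa s \<mu>)) * norm Q"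
proof -
  have "norm (\<chi> i. inner Q (phi (s i, \<mu> (s i)))) \<le> sqrt (spectral_norm (K_av kappa s \<mu>)) * norm Q"
    using norm_inner_samples_le_Gram by (simp add: K_av_eq_K_Psi_features[OF rkhs])
  also have "\<dots> \<le> sqrt (SUP \<mu>. spectral_norm (K_av kappa s \<mu>)) * norm Q"
    by (intro mult_right_mono real_sqrt_le_mono cSUP_upper[OF _ bdd]) simp_all
  finally show ?thesis .
qed

lemma abs_Inf_range_diff_le:
  fixes f g :: "'a \<Rightarrow> real"
  assumes "bdd_below (range f)" "bdd_below (range g)" "\<epsilon> > 0"
  shows "\<exists>a. \<bar>Inf (range f) - Inf (range g)\<bar> \<le> \<bar>f a - g a\<bar> + \<epsilon>"
proof (cases "Inf (range g) \<le> Inf (range f)")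
  case True
  obtain a where "g a < Inf (range g) + \<epsilon>"
    using cInf_lessD[of "range g" "Inf (range g) + \<epsilon>"] assms(3) by auto
  moreover have "Inf (range f) \<le> f a" using assms(1) by (simp add: cInf_lower)
  ultimately show ?thesis using True by (intro exI[of _ a]) linarith
next
  case False
  obtain a where "f a < Inf (range f) + \<epsilon>"
    using cInf_lessD[of "range f" "Inf (range f) + \<epsilon>"] assms(3) by auto
  moreover have "Inf (range g) \<le> g a" using assms(2) by (simp add: cInf_lower)
  ultimately show ?thesis using False by (intro exI[of _ a]) linarith
qed

lemma norm_le_if_componentwise_approx:
  fixes c :: "real^'n"
  assumes "\<And>\<epsilon>. \<epsilon> > 0 \<Longrightarrow> \<exists>d. (\<forall>i. \<bar>c$i\<bar> \<le> \<bar>d$i\<bar> + \<epsilon>) \<and> norm d \<le> B"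
  shows "norm c \<le> B"
proof (rule field_le_epsilon)
  fix e :: real assume "e > 0"
  define C where "C = norm (\<chi> i::'n. (1::real))"
  define \<epsilon> where "\<epsilon> = e / (C + 1)"
  have "C \<ge> 0" by (simp add: C_def)
  with \<open>e > 0\<close> have "\<epsilon> > 0" "\<epsilon> * C \<le> e" by (simp_all add: \<epsilon>_def field_simps)
  then obtain d where d: "\<And>i. \<bar>c$i\<bar> \<le> \<bar>d$i\<bar> + \<epsilon>" "norm d \<le> B"
    using assms by blast
  have "norm c \<le> norm ((\<chi> i. \<bar>d$i\<bar>) + \<epsilon> *\<^sub>R (\<chi> i::'n. (1::real)))"
    by (rule norm_le_componentwise_cart) (use d \<open>\<epsilon> > 0\<close> in auto)
  also have "\<dots> \<le> norm (\<chi> i. \<bar>d$i\<bar>) + \<epsilon> * C"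
    by (rule order_trans[OF norm_triangle_ineq]) (use \<open>\<epsilon> > 0\<close> in \<open>simp add: C_def\<close>)
  also have "norm (\<chi> i. \<bar>d$i\<bar>) \<le> norm d"
    by (rule norm_le_componentwise_cart) simp
  finally show "norm c \<le> B + e" using d(2) \<open>\<epsilon> * C \<le> e\<close> by linarith
qed

lemma norm_Inf_samples_diff_le_SUP:
  assumes rkhs: "is_rkhs ev kappa phi"
    and inf_finite: "\<And>Q i. bdd_below (range (\<lambda>a. ev Q (s i, a)))"
    and sup_finite: "bdd_above (range (\<lambda>\<mu>. spectral_norm (K_av kappa s \<mu>)))"
  shows "norm (\<chi> i. Inf (range (\<lambda>a. ev Q1 (s i, a))) - Inf (range (\<lambda>a. ev Q2 (s i, a))))
           \<le> sqrt (SUP \<mu>. spectral_norm (K_av kappa s \<mu>)) * norm (Q1 - Q2)"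
proof (rule norm_le_if_componentwise_approx)
  fix \<epsilon> :: real assume "\<epsilon> > 0"
  define near_min where "near_min x a \<longleftrightarrow>
    \<bar>Inf (range (\<lambda>a. ev Q1 (x, a))) - Inf (range (\<lambda>a. ev Q2 (x, a)))\<bar>
      \<le> \<bar>ev Q1 (x, a) - ev Q2 (x, a)\<bar> + \<epsilon>" for x a
  define \<mu>' where "\<mu>' x = (SOME a. near_min x a)" for x
  have "near_min (s i) (\<mu>' (s i))" for i
    unfolding \<mu>'_def
    by (rule someI_ex) (use abs_Inf_range_diff_le[OF inf_finite inf_finite \<open>\<epsilon> > 0\<close>] in
        \<open>simp add: near_min_def\<close>)
  then show "\<exists>d. (\<forall>i. \<bar>(\<chi> i. Inf (range (\<lambda>a. ev Q1 (s i, a))) - Inf (range (\<lambda>a. ev Q2 (s i, a))))$i\<bar>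
                    \<le> \<bar>d$i\<bar> + \<epsilon>)
              \<and> norm d \<le> sqrt (SUP \<mu>. spectral_norm (K_av kappa s \<mu>)) * norm (Q1 - Q2)"
    by (intro exI[of _ "\<chi> i. inner (Q1 - Q2) (phi (s i, \<mu>' (s i)))"] conjI
        norm_feature_samples_le_SUP[OF rkhs sup_finite])
      (simp add: near_min_def is_rkhs_ev_diff[OF rkhs])
qed

lemma T_mu_diff:
  assumes "is_rkhs ev kappa phi"
  shows "T_mu ev g \<alpha> s \<psi> \<mu> Q1 - T_mu ev g \<alpha> s \<psi> \<mu> Q2
           = \<alpha> *\<^sub>R (\<Sum>i\<in>UNIV. (\<chi> i. inner (Q1 - Q2) (phi (s i, \<mu> (s i))))$i *\<^sub>R \<psi> i)"
  by (simp add: T_mu_def is_rkhs_ev_diff[OF assms, symmetric] scaleR_left_diff_distrib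
      sum_subtractf scaleR_right_diff_distrib)

lemma T_opt_diff:
  "T_opt ev g \<alpha> s \<psi> Q1 - T_opt ev g \<alpha> s \<psi> Q2
     = \<alpha> *\<^sub>R (\<Sum>i\<in>UNIV.
         (\<chi> i. Inf (range (\<lambda>a. ev Q1 (s i, a))) - Inf (range (\<lambda>a. ev Q2 (s i, a))))$i *\<^sub>R \<psi> i)"
  by (simp add: T_opt_def scaleR_left_diff_distrib sum_subtractf scaleR_right_diff_distrib)

lemma norm_scaled_sum_le_beta_const:
  fixes \<psi> :: "'n::finite \<Rightarrow> 'h::real_inner"
  assumes "\<alpha> \<ge> 0" and "norm c \<le> sqrt (SUP \<mu>. spectral_norm (K_av kappa s \<mu>)) * r"
  shows "norm (\<alpha> *\<^sub>R (\<Sum>i\<in>UNIV. c$i *\<^sub>R \<psi> i)) \<le> beta_const \<alpha> kappa s \<psi> * r"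
proof -
  let ?P = "sqrt (spectral_norm (K_Psi \<psi>))"
  have "norm (\<alpha> *\<^sub>R (\<Sum>i\<in>UNIV. c$i *\<^sub>R \<psi> i)) \<le> \<alpha> * (?P * norm c)"
    using assms(1) by (simp add: mult_left_mono norm_sum_scaleR_le_Gram)
  also have "\<dots> \<le> \<alpha> * (?P * (sqrt (SUP \<mu>. spectral_norm (K_av kappa s \<mu>)) * r))"
    using assms by (intro mult_left_mono) (simp_all add: spectral_norm_nonneg)
  finally show ?thesis by (simp add: beta_const_def real_sqrt_mult mult.assoc)
qed

theorem theorem1:
  fixes ev :: "'h::{real_inner,complete_space} \<Rightarrow> ('s \<times> 'a) \<Rightarrow> real"
    and kappa :: "('s \<times> 'a) \<Rightarrow> ('s \<times> 'a) \<Rightarrow> real"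
    and phi :: "('s \<times> 'a) \<Rightarrow> 'h"
    and g :: 'h and \<alpha> :: real
    and s :: "'n::finite \<Rightarrow> 's" and \<psi> :: "'n \<Rightarrow> 'h"
  assumes rkhs: "is_rkhs ev kappa phi"
    and alpha_nonneg: "\<alpha> \<ge> 0"
    and inf_finite: "\<And>Q i. bdd_below (range (\<lambda>a. ev Q (s i, a)))"
    and sup_finite: "bdd_above (range (\<lambda>\<mu>. spectral_norm (K_av kappa s \<mu>)))"
  shows "\<forall>Q1 Q2 \<mu>.
           norm (T_mu ev g \<alpha> s \<psi> \<mu> Q1 - T_mu ev g \<alpha> s \<psi> \<mu> Q2)
             \<le> beta_const \<alpha> kappa s \<psi> * norm (Q1 - Q2)
         \<and> norm (T_opt ev g \<alpha> s \<psi> Q1 - T_opt ev g \<alpha> s \<psi> Q2)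
             \<le> beta_const \<alpha> kappa s \<psi> * norm (Q1 - Q2)"
proof (intro allI conjI)
  fix Q1 Q2 :: 'h and \<mu> :: "'s \<Rightarrow> 'a"
  show "norm (T_mu ev g \<alpha> s \<psi> \<mu> Q1 - T_mu ev g \<alpha> s \<psi> \<mu> Q2)
          \<le> beta_const \<alpha> kappa s \<psi> * norm (Q1 - Q2)"
    unfolding T_mu_diff[OF rkhs]
    by (intro norm_scaled_sum_le_beta_const alpha_nonneg
        norm_feature_samples_le_SUP[OF rkhs sup_finite])
  show "norm (T_opt ev g \<alpha> s \<psi> Q1 - T_opt ev g \<alpha> s \<psi> Q2)
          \<le> beta_const \<alpha> kappa s \<psi> * norm (Q1 - Q2)"
    unfolding T_opt_diff
    by (intro norm_scaled_sum_le_beta_const alpha_nonneg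
        norm_Inf_samples_diff_le_SUP[OF rkhs inf_finite sup_finite])
qed

end
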